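(* Let $a_1>0$ and $a_1^2+4a_2<0$, and let $X$ be the AR(2)-process with these coefficients. Assume $\mathbb{P}(Y_1>0)>0$. Then there exists $\lambda>0$ such that $\mathbb{P}(\sup_{n=1,\dots,N}X_n\le0)\precsim\exp(-\lambda N)$ as $N\to\infty$.
   Context: Let $(Y_n)_{n\ge1}$ be i.i.d. nondegenerate real random variables. The AR(2)-process is $X_n=a_1X_{n-1}+a_2X_{n-2}+Y_n$ for $n\ge1$ with $X_n=0$ for $n\le0$. $f\precsim g$ means $\limsup_{N\to\infty} f(N)/g(N)<\infty$. *)

theory Defs
  imports "HOL-Probability.Probability" "HOL-Library.Landau_Symbols"
begin

text \<open>AR(2) recursion X_n = a1 X_(n-1) + a2 X_(n-2) + Y_n for n >= 1, with X_n = 0 for n <= 0.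
  Index 0 stands for X_0 = 0; X_(-1) = 0 is used in X_1 = Y_1.\<close>
fun ar2 :: "real \<Rightarrow> real \<Rightarrow> (nat \<Rightarrow> real) \<Rightarrow> nat \<Rightarrow> real" where
  "ar2 a1 a2 y 0 = 0"
| "ar2 a1 a2 y (Suc 0) = y 1"
| "ar2 a1 a2 y (Suc (Suc n)) = a1 * ar2 a1 a2 y (Suc n) + a2 * ar2 a1 a2 y n + y (Suc (Suc n))"

end

theory Submission
  imports Defs
begin

(* If a1 > 0 and a1^2 + 4 a2 < 0, the characteristic roots of the AR(2)
   recursion are non-real, so the deterministic recursion cannot stay nonpositive for long
   while it is pushed upwards by positive innovations: there is a constant K such that
   x_m, ..., x_(m+K+2) <= 0 forces some y among y_(m+2), ..., y_(m+K+2) to be <= 0.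
   (Along such a run the ratio x_(n+1)/x_n is bounded below by a1 - j d and drops by a fixed
   amount d > 0 per step, which is impossible for more than a1/d steps.)
   Hence {X_1, ..., X_N <= 0} is contained in the event that each of (N-1) div (K+1)
   disjoint blocks of K+1 consecutive innovations contains a nonpositive one. *)

section \<open>The deterministic recursion\<close>

text \<open>The negative discriminant yields a uniform gap: the ratio map c \<mapsto> a1 + a2/c
  lowers every c in (0, a1] by at least a fixed d > 0.\<close>
lemma ar2_ratio_gap:
  fixes a1 a2 :: real
  assumes a1: "a1 > 0" and disc: "a1\<^sup>2 + 4 * a2 < 0"
  shows "\<exists>d>0. \<forall>c. 0 < c \<longrightarrow> c \<le> a1 \<longrightarrow> a1 + a2 / c \<le> c - d"
proof -
  define D where "D = -(a1\<^sup>2 + 4 * a2) / 4"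
  define d where "d = D / a1"
  have D: "D > 0" using disc by (simp add: D_def)
  have d: "d > 0" using D a1 by (simp add: d_def)
  have "a1 + a2 / c \<le> c - d" if c: "0 < c" "c \<le> a1" for c
  proof -
    have "c\<^sup>2 - a1 * c - a2 \<ge> D"
      unfolding D_def using zero_le_power2[of "c - a1/2"]
      unfolding power2_eq_square by (simp add: field_simps)
    moreover have "d * c \<le> D" using c d a1 by (simp add: d_def field_simps)
    ultimately have "a1 * c + a2 \<le> (c - d) * c" by (simp add: power2_eq_square algebra_simps)
    then show ?thesis using c by (simp add: field_simps)
  qed
  then show ?thesis using d by blast
qed

lemma ar2_ratio_decay:
  fixes x y :: "nat \<Rightarrow> real" and a1 a2 d :: real
  assumes a2: "a2 < 0" and d: "d > 0"
    and gap: "\<And>c. 0 < c \<Longrightarrow> c \<le> a1 \<Longrightarrow> a1 + a2 / c \<le> c - d"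
    and rec: "\<And>n. x (Suc (Suc n)) = a1 * x (Suc n) + a2 * x n + y (Suc (Suc n))"
    and nonpos: "\<forall>i\<le>j+2. x (m+i) \<le> 0" and pos: "\<forall>i\<le>j. y (m+i+2) > 0"
  shows "x (m+j+2) > (a1 - j * d) * x (m+j+1)"
  using nonpos pos
proof (induction j)
  case 0
  have "x (m+2) = a1 * x (m+1) + a2 * x m + y (m+2)" using rec[of m] by simp
  moreover have "a2 * x m \<ge> 0"
    using a2 "0.prems"(1)[rule_format, of 0] by (simp add: mult_nonpos_nonpos)
  moreover have "y (m+2) > 0" using "0.prems"(2) by auto
  ultimately show ?case by simp
next
  case (Suc j)
  define c where "c = a1 - j * d"
  define u where "u = x (m+j+1)"
  define v where "v = x (m+j+2)"
  have vc: "v > c * u" using Suc by (simp add: c_def u_def v_def)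
  have u0: "u \<le> 0" using Suc.prems(1)[rule_format, of "j+1"] by (simp add: u_def add.assoc)
  have v0: "v \<le> 0" using Suc.prems(1)[rule_format, of "j+2"] by (simp add: v_def add.assoc)
  have step: "x (m + Suc j + 2) = a1 * v + a2 * u + y (m + Suc j + 2)"
    using rec[of "m+j+1"] by (simp add: u_def v_def add.assoc eval_nat_numeral)
  have ypos: "y (m + Suc j + 2) > 0" using Suc.prems(2)[rule_format, of "Suc j"] by simp
  have cpos: "c > 0"
  proof (rule ccontr)
    assume "\<not> c > 0"
    then have "c * u \<ge> 0" using u0 by (simp add: mult_nonpos_nonpos)
    then show False using vc v0 by linarith
  qed
  have "u < v / c" using vc cpos by (simp add: field_simps)
  then have "a2 * u > a2 * (v / c)" using a2 by (metis mult_less_cancel_left_neg)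
  then have "x (m + Suc j + 2) > (a1 + a2 / c) * v" using step ypos by (simp add: algebra_simps)
  moreover have "(a1 + a2 / c) * v \<ge> (c - d) * v"
    using gap[OF cpos] d v0 by (simp add: c_def mult_right_mono_neg)
  ultimately have "x (m + Suc j + 2) > (c - d) * v" by linarith
  moreover have "a1 - real (Suc j) * d = c - d" by (simp add: c_def algebra_simps)
  moreover have "x (m + Suc j + 1) = v" by (simp add: v_def)
  ultimately show ?case by simp
qed

definition ar2_bounded_runs :: "real \<Rightarrow> real \<Rightarrow> nat \<Rightarrow> bool" where
  "ar2_bounded_runs a1 a2 K \<longleftrightarrow>
     (\<forall>(x::nat \<Rightarrow> real) y m.
        (\<forall>n. x (Suc (Suc n)) = a1 * x (Suc n) + a2 * x n + y (Suc (Suc n)))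
        \<longrightarrow> (\<forall>i\<le>K+2. x (m+i) \<le> 0) \<longrightarrow> (\<exists>i\<le>K. y (m+i+2) \<le> 0))"

text \<open>Consequently the nonpositive runs are bounded: once the ratio bound a1 - K d
  becomes nonpositive, the next term would have to be positive.\<close>
lemma ar2_no_long_nonpositive_run:
  fixes a1 a2 :: real
  assumes a1: "a1 > 0" and disc: "a1\<^sup>2 + 4 * a2 < 0"
  shows "\<exists>K. ar2_bounded_runs a1 a2 K"
proof -
  obtain d where d: "d > 0" and gap: "\<And>c. 0 < c \<Longrightarrow> c \<le> a1 \<Longrightarrow> a1 + a2 / c \<le> c - d"
    using ar2_ratio_gap[OF a1 disc] by blast
  have a2: "a2 < 0" using disc zero_le_power2[of a1] by linarith
  define K where "K = nat \<lceil>a1 / d\<rceil>"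
  have "real K \<ge> a1 / d" unfolding K_def by linarith
  then have K: "a1 - real K * d \<le> 0" using d by (simp add: field_simps)
  show ?thesis
  proof (rule exI[of _ K], unfold ar2_bounded_runs_def, intro allI impI)
    fix x y :: "nat \<Rightarrow> real" and m
    assume rec: "\<forall>n. x (Suc (Suc n)) = a1 * x (Suc n) + a2 * x n + y (Suc (Suc n))"
      and nonpos: "\<forall>i\<le>K+2. x (m+i) \<le> 0"
    show "\<exists>i\<le>K. y (m+i+2) \<le> 0"
    proof (rule ccontr)
      assume "\<not> (\<exists>i\<le>K. y (m+i+2) \<le> 0)"
      then have pos: "\<forall>i\<le>K. y (m+i+2) > 0" by (meson not_le)
      have "x (m+K+2) > (a1 - real K * d) * x (m+K+1)"
        by (rule ar2_ratio_decay[OF a2 d gap rec[rule_format] nonpos pos])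
      moreover have "(a1 - real K * d) * x (m+K+1) \<ge> 0"
        using K nonpos[rule_format, of "K+1"] by (simp add: mult_nonpos_nonpos add.assoc)
      moreover have "x (m+K+2) \<le> 0" using nonpos[rule_format, of "K+2"] by (simp add: add.assoc)
      ultimately show False by linarith
    qed
  qed
qed

definition block :: "nat \<Rightarrow> nat \<Rightarrow> nat set" where
  "block L i = {i * L + 2 ..< i * L + L + 2}"

lemma block_disjoint: "disjoint_family (block L)"
  unfolding disjoint_family_on_def
proof (intro ballI impI)
  fix i i' :: nat
  assume "i \<noteq> i'"
  then consider "Suc i \<le> i'" | "Suc i' \<le> i" by linarith
  then show "block L i \<inter> block L i' = {}"
  proof cases
    case 1
    then have "Suc i * L \<le> i' * L" by (rule mult_le_mono1)
    then show ?thesis by (auto simp: block_def)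
  next
    case 2
    then have "Suc i' * L \<le> i * L" by (rule mult_le_mono1)
    then show ?thesis by (auto simp: block_def)
  qed
qed

lemma ar2_nonpositive_blocks:
  fixes a1 a2 :: real and y :: "nat \<Rightarrow> real"
  assumes run: "ar2_bounded_runs a1 a2 K"
    and nonpos: "\<forall>n\<in>{1..N}. ar2 a1 a2 y n \<le> 0"
    and i: "i < (N - 1) div (K + 1)"
  shows "\<exists>j\<in>block (K+1) i. y j \<le> 0"
proof -
  have "Suc i * (K+1) \<le> (N - 1) div (K + 1) * (K+1)" using i by (intro mult_le_mono1) simp
  also have "\<dots> \<le> N - 1" by (rule div_times_less_eq_dividend)
  finally have end_le: "i * (K+1) + K + 2 \<le> N" by simp
  have "ar2 a1 a2 y (i * (K+1) + i') \<le> 0" if "i' \<le> K + 2" for i'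
    using nonpos that end_le by (cases "i * (K+1) + i' = 0") auto
  then obtain i' where "i' \<le> K" "y (i * (K+1) + i' + 2) \<le> 0"
    using run[unfolded ar2_bounded_runs_def, rule_format, of "ar2 a1 a2 y" y "i * (K+1)"] by auto
  then show ?thesis by (intro bexI[of _ "i * (K+1) + i' + 2"]) (auto simp: block_def)
qed

section \<open>Independent blocks of innovations\<close>

context prob_space
begin

lemma prob_all_positive:
  assumes indep: "indep_vars (\<lambda>_. borel) Y I" and J: "finite J" "J \<noteq> {}" "J \<subseteq> I"
    and p: "\<And>j. j \<in> J \<Longrightarrow> prob {\<omega> \<in> space M. Y j \<omega> > (0::real)} = p"
  shows "prob {\<omega> \<in> space M. \<forall>j\<in>J. Y j \<omega> > 0} = p ^ card J"
proof -
  have "indep_events (\<lambda>j. {\<omega> \<in> space M. Y j \<omega> > 0}) I"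
    by (rule indep_eventsI_indep_vars[OF indep]) simp
  then have "prob (\<Inter>j\<in>J. {\<omega> \<in> space M. Y j \<omega> > 0}) = (\<Prod>j\<in>J. prob {\<omega> \<in> space M. Y j \<omega> > 0})"
    using J unfolding indep_events_def by blast
  moreover have "(\<Inter>j\<in>J. {\<omega> \<in> space M. Y j \<omega> > 0}) = {\<omega> \<in> space M. \<forall>j\<in>J. Y j \<omega> > 0}"
    using J(2) by auto
  ultimately show ?thesis using p by simp
qed

lemma indep_events_block_failure:
  assumes indep: "indep_vars (\<lambda>_. borel) Y I"
    and B: "\<And>i. B i \<subseteq> I" "\<And>i. finite (B i)" "disjoint_family B"
  shows "indep_events (\<lambda>i. {\<omega> \<in> space M. \<exists>j\<in>B i. Y j \<omega> \<le> (0::real)}) UNIV"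
proof -
  have "indep_vars (\<lambda>i. PiM (B i) (\<lambda>_. borel)) (\<lambda>i \<omega>. restrict (\<lambda>j. Y j \<omega>) (B i)) UNIV"
    by (rule indep_vars_restrict[OF indep B(1) B(3)])
  then have "indep_events (\<lambda>i. {\<omega> \<in> space M. \<exists>j\<in>B i. restrict (\<lambda>j. Y j \<omega>) (B i) j \<le> 0}) UNIV"
  proof (rule indep_eventsI_indep_vars)
    fix i
    have "finite (B i)" by (rule B(2))
    then show "{v \<in> space (PiM (B i) (\<lambda>_. borel)). \<exists>j\<in>B i. v j \<le> (0::real)}
               \<in> sets (PiM (B i) (\<lambda>_. borel))"
      by measurable
  qed
  then show ?thesis by simp
qed

lemma prob_all_blocks_fail:
  assumes indep: "indep_vars (\<lambda>_. borel) Y {1..}"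
    and p: "\<And>j. j \<ge> 1 \<Longrightarrow> prob {\<omega> \<in> space M. Y j \<omega> > (0::real)} = p" and L: "L \<ge> 1"
  shows "prob {\<omega> \<in> space M. \<forall>i<n. \<exists>j\<in>block L i. Y j \<omega> \<le> 0} \<le> (1 - p ^ L) ^ n"
proof (cases "n = 0")
  case True
  then show ?thesis by simp
next
  case False
  define F where "F i = {\<omega> \<in> space M. \<exists>j\<in>block L i. Y j \<omega> \<le> 0}" for i
  have blocks: "block L i \<subseteq> {1..}" "finite (block L i)" "block L i \<noteq> {}" "card (block L i) = L" for i
    using L by (auto simp: block_def)
  have F_indep: "indep_events F UNIV"
    unfolding F_def using indep_events_block_failure[OF indep blocks(1,2) block_disjoint] .
  have F_events: "F i \<in> events" for i using F_indep by (auto simp: indep_events_def)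
  have "prob (F i) = 1 - p ^ L" for i
  proof -
    have "{\<omega> \<in> space M. \<forall>j\<in>block L i. Y j \<omega> > 0} = space M - F i"
      by (auto simp: F_def not_less)
    moreover have "prob {\<omega> \<in> space M. \<forall>j\<in>block L i. Y j \<omega> > 0} = p ^ L"
      using prob_all_positive[OF indep blocks(2,3,1), of i p] blocks(4)
      by (simp add: p block_def)
    ultimately show ?thesis using prob_compl[OF F_events[of i]] by simp
  qed
  moreover have "prob (\<Inter>i\<in>{..<n}. F i) = (\<Prod>i\<in>{..<n}. prob (F i))"
  proof -
    have "{..<n} \<noteq> {}" using False by auto
    then show ?thesis using F_indep unfolding indep_events_def by blast
  qed
  moreover have "{\<omega> \<in> space M. \<forall>i<n. \<exists>j\<in>block L i. Y j \<omega> \<le> 0} = (\<Inter>i\<in>{..<n}. F i)"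
    using False by (auto simp: F_def)
  ultimately show ?thesis by simp
qed

end

section \<open>Asymptotics\<close>

lemma geometric_blocks_bigo:
  fixes f :: "nat \<Rightarrow> real" and s :: real
  assumes s: "0 \<le> s" "s < 1" and L: "L \<ge> 1"
    and bound: "\<And>N. \<bar>f N\<bar> \<le> s ^ ((N - 1) div L)"
  shows "\<exists>l>0. f \<in> O(\<lambda>N. exp (- l * real N))"
proof -
  define r where "r = max s (1/2)"
  have r: "r > 0" "r < 1" "s \<le> r" using s by (auto simp: r_def)
  define l where "l = - ln r / real L"
  have lnr: "ln r < 0" using r by simp
  have "l > 0" using lnr L by (simp add: l_def divide_less_0_iff)
  moreover have "f \<in> O(\<lambda>N. exp (- l * real N))"
  proof (rule bigoI[where c = "exp (- ln r)"], rule always_eventually, rule allI)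
    fix N :: nat
    define n where "n = (N - 1) div L"
    have "N - 1 = n * L + (N - 1) mod L" by (simp add: n_def)
    moreover have "(N - 1) mod L < L" using L by simp
    ultimately have "N \<le> n * L + L" by linarith
    then have "real N \<le> real n * real L + real L" by (metis of_nat_add of_nat_le_iff of_nat_mult)
    then have n_ge: "real n \<ge> real N / real L - 1" using L by (simp add: field_simps)
    have "\<bar>f N\<bar> \<le> s ^ n" using bound[of N] by (simp add: n_def)
    also have "\<dots> \<le> r ^ n" using r s by (intro power_mono) auto
    also have "\<dots> = exp (real n * ln r)" using r by (simp add: exp_of_nat_mult)
    also have "\<dots> \<le> exp ((real N / real L - 1) * ln r)"
      using n_ge lnr by (intro exp_mono mult_right_mono_neg) auto
    also have "\<dots> = exp (- ln r) * exp (- l * real N)"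
      using L by (simp add: l_def field_simps flip: exp_add)
    finally show "norm (f N) \<le> exp (- ln r) * norm (exp (- l * real N))" by simp
  qed
  ultimately show ?thesis by blast
qed

lemma prob_positive_eq_distr:
  assumes "prob_space M" "X \<in> borel_measurable M" "Z \<in> borel_measurable M"
    and "distr M borel X = distr M borel Z"
  shows "measure M {\<omega> \<in> space M. X \<omega> > (0::real)} = measure M {\<omega> \<in> space M. Z \<omega> > 0}"
proof -
  have "measure M {\<omega> \<in> space M. V \<omega> > 0} = measure (distr M borel V) {0<..}"
    if "V \<in> borel_measurable M" for V :: "'a \<Rightarrow> real"
    using that by (subst measure_distr) (auto simp: vimage_def Int_def conj_commute)
  then show ?thesis using assms by metis
qed

theorem mainTheorem12:
  fixes M :: "'a measure" and Y :: "nat \<Rightarrow> 'a \<Rightarrow> real" and a1 a2 :: real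
  assumes "prob_space M"
    and meas: "\<And>n. Y n \<in> borel_measurable M"
    and indep: "prob_space.indep_vars M (\<lambda>_. borel) Y {1..}"
    and ident: "\<And>n. n \<ge> 1 \<Longrightarrow> distr M borel (Y n) = distr M borel (Y 1)"
    and nondeg: "\<not> (\<exists>c. AE \<omega> in M. Y 1 \<omega> = c)"
    and "a1 > 0" and "a1\<^sup>2 + 4 * a2 < 0"
    and pos: "measure M {\<omega> \<in> space M. Y 1 \<omega> > 0} > 0"
  shows "\<exists>l>0. (\<lambda>N. measure M {\<omega> \<in> space M. \<forall>n\<in>{1..N}. ar2 a1 a2 (\<lambda>k. Y k \<omega>) n \<le> 0})
             \<in> O(\<lambda>N. exp (- l * real N))"
proof -
  interpret prob_space M by fact
  obtain K where run: "ar2_bounded_runs a1 a2 K"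
    using ar2_no_long_nonpositive_run \<open>a1 > 0\<close> \<open>a1\<^sup>2 + 4 * a2 < 0\<close> by blast
  define p where "p = prob {\<omega> \<in> space M. Y 1 \<omega> > 0}"
  have p: "prob {\<omega> \<in> space M. Y j \<omega> > 0} = p" if "j \<ge> 1" for j
    unfolding p_def using prob_positive_eq_distr[OF \<open>prob_space M\<close> meas meas ident[OF that]] .
  have "0 < p" "p \<le> 1" using pos by (auto simp: p_def)
  then have p_range: "0 < p ^ (K+1)" "p ^ (K+1) \<le> 1"
    using power_le_one[of p "K+1"] by simp_all
  have "prob {\<omega> \<in> space M. \<forall>n\<in>{1..N}. ar2 a1 a2 (\<lambda>k. Y k \<omega>) n \<le> 0}
        \<le> (1 - p ^ (K+1)) ^ ((N - 1) div (K+1))" for N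
  proof -
    let ?blocks = "{\<omega> \<in> space M. \<forall>i<(N - 1) div (K+1). \<exists>j\<in>block (K+1) i. Y j \<omega> \<le> 0}"
    have "prob {\<omega> \<in> space M. \<forall>n\<in>{1..N}. ar2 a1 a2 (\<lambda>k. Y k \<omega>) n \<le> 0} \<le> prob ?blocks"
      using ar2_nonpositive_blocks[OF run] meas by (intro finite_measure_mono) auto
    also have "\<dots> \<le> (1 - p ^ (K+1)) ^ ((N - 1) div (K+1))"
      using prob_all_blocks_fail[OF indep p, of "K+1"] by simp
    finally show ?thesis .
  qed
  then show ?thesis
    using p_range by (intro geometric_blocks_bigo[where L = "K+1" and s = "1 - p ^ (K+1)"]) auto
qed

end
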